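(* Consider Algorithm iR2N (described in the context) and suppose (A5) and (A6) hold. Let $\epsilon>0$ and let $k$ be an iteration with $\nu_k^{-1}\|\hat s_{k,\mathrm{cp}}\|<\epsilon$. Then there exists $s_{k,\mathrm{cp}}\in\operatorname{argmin}_s m_{\mathrm{cp}}(s;x_k,\nu_k^{-1})$ satisfying the inequality in (A5) (i.e., $\|\hat s_{k,\mathrm{cp}}\|\ge\kappa_s\|s_{k,\mathrm{cp}}\|$) such that $\|s_{k,\mathrm{cp}}\|<\kappa_s^{-1}\nu_{\max}\epsilon$, and there exists $u_k\in\nabla f(x_k)+\partial\psi(s_{k,\mathrm{cp}};x_k)$ with $$\|u_k\|<\big(\kappa_\nabla\theta_2\nu_{\max}+\kappa_s^{-1}\big)\epsilon,$$ where $\nu_{\max}=\theta_1/\sigma_{\min}$.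
   Context: Setting. $f:\mathbb{R}^n\to\mathbb{R}$ is continuously differentiable, $h:\mathbb{R}^n\to\mathbb{R}\cup\{+\infty\}$ is proper and lower semicontinuous; the problem is $\min_x f(x)+h(x)$. $\|\cdot\|$ is the Euclidean norm (spectral norm for matrices). For each $x$, approximations $\hat f(x)\in\mathbb{R}$ of $f(x)$ and $\hat\nabla f(x)\in\mathbb{R}^n$ of $\nabla f(x)$ are available. For each $x$, $\psi(\cdot;x):\mathbb{R}^n\to\mathbb{R}\cup\{+\infty\}$ is proper, lsc, satisfies $\psi(0;x)=h(x)$ and $\partial\psi(0;x)\subseteq\partial h(x)$ ($\partial$ = limiting subdifferential), and is uniformly prox-bounded: there is $\lambda>0$ such that for every $x$ and every $0<\lambda'<\lambda$, $w\mapsto\psi(w;x)+\tfrac{1}{2\lambda'}\|w\|^2$ is bounded below. Models: $\varphi_{\mathrm{cp}}(s;x)=\hat f(x)+\hat\nabla f(x)^Ts$; $m_{\mathrm{cp}}(s;x,\nu^{-1})=\varphi_{\mathrm{cp}}(s;x)+\tfrac12\nu^{-1}\|s\|^2+\psi(s;x)$; for a symmetric $B(x)\in\mathbb{R}^{n\times n}$, $\varphi(s;x)=\hat f(x)+\hat\nabla f(x)^Ts+\tfrac12 s^TB(x)s$ and $m(s;x,\sigma)=\varphi(s;x)+\tfrac12\sigma\|s\|^2+\psi(s;x)$. Algorithm iR2N. Constants: $\kappa_f,\kappa_\nabla>0$, $0<\gamma_3\le 1<\gamma_1\le\gamma_2$, $0<\hat\eta_1\le\hat\eta_2<1$, $0<\theta_1<1<\theta_2$,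 $\sigma_{\min}>4\kappa_f\theta_1\theta_2^2/(\hat\eta_1(1-\theta_1))$, $\sigma_0\ge\sigma_{\min}$, $x_0\in\mathbb{R}^n$. At iteration $k=0,1,\dots$: choose symmetric $B_k=B(x_k)$; set $\nu_k=\theta_1/(\|B_k\|+\sigma_k)$; compute $\hat s_{k,\mathrm{cp}}$ with $m_{\mathrm{cp}}(\hat s_{k,\mathrm{cp}};x_k,\nu_k^{-1})\le m_{\mathrm{cp}}(0;x_k,\nu_k^{-1})$ (an approximate minimizer of $m_{\mathrm{cp}}(\cdot;x_k,\nu_k^{-1})$ obtained by a descent procedure from $s=0$); compute $s_k$ with $m(s_k;x_k,\sigma_k)\le m(\hat s_{k,\mathrm{cp}};x_k,\sigma_k)$; if $\|s_k\|>\theta_2\|\hat s_{k,\mathrm{cp}}\|$, reset $s_k=\hat s_{k,\mathrm{cp}}$ (these computations are repeated with refined $\hat f,\hat\nabla f$ until (A6) holds). Compute $$\hat\rho_k=\frac{\hat f(x_k)+h(x_k)-\hat f(x_k+s_k)-h(x_k+s_k)}{\varphi(0;x_k)+\psi(0;x_k)-\varphi(s_k;x_k)-\psi(s_k;x_k)},$$ where $\varphi(\cdot;x_k)$ uses $B_k$. If $\hat\rho_k\ge\hat\eta_1$ set $x_{k+1}=x_k+s_k$, else $x_{k+1}=x_k$. Choose $\sigma_{k+1}\in[\gamma_3\sigma_k,\sigma_k]$ if $\hat\rho_k\ge\hat\eta_2$, $\sigma_{k+1}\in[\sigma_k,\gamma_1\sigma_k]$ if $\hat\eta_1\le\hat\rho_k<\hat\eta_2$,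 $\sigma_{k+1}\in[\gamma_1\sigma_k,\gamma_2\sigma_k]$ if $\hat\rho_k<\hat\eta_1$; then reset $\sigma_{k+1}=\max(\sigma_{k+1},\sigma_{\min})$. Assumptions. (A5) There is $\kappa_s\in(0,1]$ such that for all $k$ the set $\operatorname{argmin}_s m_{\mathrm{cp}}(s;x_k,\nu_k^{-1})$ (the set of exact Cauchy steps, equal to $\mathrm{prox}_{\nu_k\psi(\cdot;x_k)}(-\nu_k\hat\nabla f(x_k))$) is nonempty and $\|\hat s_{k,\mathrm{cp}}\|\ge\kappa_s\min\{\|s\|\mid s\in\operatorname{argmin}_{s'} m_{\mathrm{cp}}(s';x_k,\nu_k^{-1})\}$. (A6) For all $k$: $|f(x_k)-\hat f(x_k)|\le\kappa_f\|s_k\|^2$, $|f(x_k+s_k)-\hat f(x_k+s_k)|\le\kappa_f\|s_k\|^2$, $\|\nabla f(x_k)-\hat\nabla f(x_k)\|\le\kappa_\nabla\|s_k\|$. *)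

theory Defs
  imports "HOL-Analysis.Analysis" "HOL-Library.Extended_Real"
begin

text \<open>Extended-real-valued functions on a Euclidean space model functions into
  the reals extended by plus infinity (properness forbids minus infinity).\<close>

definition proper_fun :: "('a \<Rightarrow> ereal) \<Rightarrow> bool" where
  "proper_fun F \<longleftrightarrow> (\<forall>x. F x \<noteq> -\<infinity>) \<and> (\<exists>x. F x \<noteq> \<infinity>)"

definition lsc_fun :: "('a::topological_space \<Rightarrow> ereal) \<Rightarrow> bool" where
  "lsc_fun F \<longleftrightarrow> (\<forall>x X. X \<longlonglongrightarrow> x \<longrightarrow> F x \<le> liminf (\<lambda>j. F (X j)))"

text \<open>Frechet (regular) subdifferential: v is a Frechet subgradient of F at x iff
  F x is finite and liminf_{y -> x, y ~= x} (F y - F x - v.(y-x)) / norm (y-x) >= 0,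
  written out in epsilon-delta form.\<close>
definition frechet_subdiff :: "('a::real_inner \<Rightarrow> ereal) \<Rightarrow> 'a \<Rightarrow> 'a set" where
  "frechet_subdiff F x = {v. \<bar>F x\<bar> \<noteq> \<infinity> \<and>
     (\<forall>e>0. \<exists>d>0. \<forall>y. norm (y - x) < d \<longrightarrow>
        ereal (real_of_ereal (F x) + inner v (y - x) - e * norm (y - x)) \<le> F y)}"

definition limiting_subdiff :: "('a::real_inner \<Rightarrow> ereal) \<Rightarrow> 'a \<Rightarrow> 'a set" where
  "limiting_subdiff F x = {v. \<bar>F x\<bar> \<noteq> \<infinity> \<and>
     (\<exists>X V. X \<longlonglongrightarrow> x \<and> (\<lambda>j. F (X j)) \<longlonglongrightarrow> F x \<and> V \<longlonglongrightarrow> v \<and>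
            (\<forall>j. V j \<in> frechet_subdiff F (X j)))}"

definition argmin_set :: "('a \<Rightarrow> ereal) \<Rightarrow> 'a set" where
  "argmin_set F = {s. \<forall>t. F s \<le> F t}"

definition spec_norm :: "real^'n^'n \<Rightarrow> real" where
  "spec_norm B = onorm (\<lambda>v. B *v v)"

text \<open>Models of the paper (psi x s stands for psi(s;x)).\<close>
definition m_cp :: "real \<Rightarrow> real^'n \<Rightarrow> (real^'n \<Rightarrow> ereal) \<Rightarrow> real \<Rightarrow> real^'n \<Rightarrow> ereal" where
  "m_cp fh gh ps nuinv s = ereal (fh + inner gh s + nuinv / 2 * (norm s)\<^sup>2) + ps s"

definition phi_q :: "real \<Rightarrow> real^'n \<Rightarrow> real^'n^'n \<Rightarrow> real^'n \<Rightarrow> real" where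
  "phi_q fh gh B s = fh + inner gh s + inner s (B *v s) / 2"

definition m_q :: "real \<Rightarrow> real^'n \<Rightarrow> real^'n^'n \<Rightarrow> (real^'n \<Rightarrow> ereal) \<Rightarrow> real \<Rightarrow> real^'n \<Rightarrow> ereal" where
  "m_q fh gh B ps sg s = ereal (phi_q fh gh B s + sg / 2 * (norm s)\<^sup>2) + ps s"

end

theory Submission
  imports Defs
begin

(* The exact Cauchy steps form the argmin set of a continuous function plus a proper lsc one,
   which is closed, so it contains a step scp of minimal norm, and (A5) gives
   ks * norm scp \<le> norm shat.  The first-order condition at the minimizer scp puts
   -(gh + scp / nu) in the subdifferential of psi at scp, so u = fgrad x - gh - scp / nu is the
   required element.  Its norm is bounded via (A6), the safeguard norm s \<le> th2 * norm shat, and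
   nu \<le> th1 / smin, which holds because the regularization parameter never drops below smin. *)

lemma argmin_set_value_finite:
  assumes "s \<in> argmin_set (\<lambda>y. ereal (g y) + P y)" and "proper_fun P"
  shows "\<bar>P s\<bar> \<noteq> \<infinity>"
proof -
  obtain z where "P z \<noteq> \<infinity>"
    using assms(2) unfolding proper_fun_def by auto
  moreover have "ereal (g s) + P s \<le> ereal (g z) + P z"
    using assms(1) unfolding argmin_set_def by auto
  ultimately have "P s \<noteq> \<infinity>" by auto
  then show ?thesis
    using assms(2) unfolding proper_fun_def by auto
qed

lemma closed_argmin_set_continuous_plus_lsc:
  fixes g :: "'a::metric_space \<Rightarrow> real" and P :: "'a \<Rightarrow> ereal"
  assumes g: "continuous_on UNIV g" and lsc: "lsc_fun P" and proper: "proper_fun P"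
  shows "closed (argmin_set (\<lambda>s. ereal (g s) + P s))"
  unfolding closed_sequential_limits
proof (intro allI impI, elim conjE)
  let ?F = "\<lambda>s. ereal (g s) + P s"
  fix X l
  assume X: "\<forall>j. X j \<in> argmin_set ?F" and Xl: "X \<longlonglongrightarrow> l"
  have min: "?F (X j) \<le> ?F t" for j t
    using X unfolding argmin_set_def by blast
  have "\<bar>P (X 0)\<bar> \<noteq> \<infinity>"
    using X proper by (intro argmin_set_value_finite) auto
  then obtain r where r: "?F (X 0) = ereal r"
    by (cases "P (X 0)") auto
  have P_X: "P (X j) = ereal (r - g (X j))" for j
  proof -
    have "?F (X j) = ereal r"
      using r order.antisym[OF min[of j "X 0"] min[of 0 "X j"]] by simp
    then show ?thesis by (cases "P (X j)") auto
  qed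
  have "isCont g l"
    using g by (simp add: continuous_on_eq_continuous_at)
  then have "(\<lambda>j. g (X j)) \<longlonglongrightarrow> g l"
    using Xl by (rule isCont_tendsto_compose)
  then have "(\<lambda>j. P (X j)) \<longlonglongrightarrow> ereal (r - g l)"
    unfolding P_X by (intro tendsto_intros)
  then have "liminf (\<lambda>j. P (X j)) = ereal (r - g l)"
    by (intro lim_imp_Liminf) auto
  moreover have "P l \<le> liminf (\<lambda>j. P (X j))"
    using lsc Xl unfolding lsc_fun_def by auto
  ultimately have "P l \<le> ereal (r - g l)"
    by simp
  then have "?F l \<le> ereal r"
    by (cases "P l") auto
  then have "?F l \<le> ?F t" for t
    using min[of 0 t, unfolded r] by (rule order.trans)
  then show "l \<in> argmin_set ?F"
    unfolding argmin_set_def by blast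
qed

lemma closed_nonempty_attains_Inf_norm:
  fixes A :: "'a::{heine_borel, real_normed_vector} set"
  assumes "closed A" and "A \<noteq> {}"
  obtains a where "a \<in> A" and "Inf (norm ` A) = norm a"
proof -
  obtain a where "a \<in> A" and "\<And>y. y \<in> A \<Longrightarrow> dist 0 a \<le> dist 0 y"
    using distance_attains_inf[OF assms, of 0] by blast
  then have "Inf (norm ` A) = norm a"
    by (intro cInf_eq_minimum) auto
  with \<open>a \<in> A\<close> show ?thesis
    by (rule that)
qed

(* The quadratic term c/2 * norm (y - s)^2 is absorbed by e * norm (y - s) when norm (y - s) < 2e/c. *)
lemma frechet_subdiff_at_argmin_quadratic:
  fixes P :: "'a::real_inner \<Rightarrow> ereal"
  assumes min: "s \<in> argmin_set (\<lambda>y. ereal (a + inner b y + c / 2 * (norm y)\<^sup>2) + P y)"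
    and c: "c > 0" and proper: "proper_fun P"
  shows "- (b + c *\<^sub>R s) \<in> frechet_subdiff P s"
  unfolding frechet_subdiff_def
proof (intro CollectI conjI allI impI)
  show fin: "\<bar>P s\<bar> \<noteq> \<infinity>"
    using argmin_set_value_finite[OF min proper] .
  then obtain ps where ps: "P s = ereal ps" by (cases "P s") auto
  fix e :: real
  assume e: "e > 0"
  show "\<exists>d>0. \<forall>y. norm (y - s) < d \<longrightarrow>
        ereal (real_of_ereal (P s) + inner (- (b + c *\<^sub>R s)) (y - s) - e * norm (y - s)) \<le> P y"
  proof (intro exI[of _ "2 * e / c"] conjI allI impI)
    show "0 < 2 * e / c" using e c by simp
    fix y
    assume y: "norm (y - s) < 2 * e / c"
    show "ereal (real_of_ereal (P s) + inner (- (b + c *\<^sub>R s)) (y - s) - e * norm (y - s)) \<le> P y"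
    proof (cases "P y")
      case (real py)
      define d where "d = y - s"
      have "ereal (a + inner b s + c / 2 * (norm s)\<^sup>2) + P s
          \<le> ereal (a + inner b y + c / 2 * (norm y)\<^sup>2) + P y"
        using min unfolding argmin_set_def by blast
      then have "a + inner b s + c / 2 * (norm s)\<^sup>2 + ps \<le> a + inner b y + c / 2 * (norm y)\<^sup>2 + py"
        using ps real by simp
      moreover have "(norm y)\<^sup>2 = (norm s)\<^sup>2 + 2 * inner s d + (norm d)\<^sup>2"
        unfolding d_def power2_norm_eq_inner by (simp add: inner_diff_left inner_diff_right inner_commute)
      moreover have "inner b y = inner b s + inner b d"
        unfolding d_def by (simp add: inner_diff_right)
      ultimately have "ps - inner b d - c * inner s d - c / 2 * (norm d)\<^sup>2 \<le> py"
        by (simp add: algebra_simps)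
      moreover have "c / 2 * (norm d)\<^sup>2 \<le> e * norm d"
      proof -
        have "c * norm d \<le> 2 * e"
          using y c unfolding d_def by (simp add: field_simps)
        then have "c * norm d * norm d \<le> 2 * e * norm d"
          by (simp add: mult_right_mono)
        then show ?thesis
          by (simp add: power2_eq_square algebra_simps)
      qed
      moreover have "inner (- (b + c *\<^sub>R s)) d = - inner b d - c * inner s d"
        by (simp add: inner_diff_left inner_minus_left)
      ultimately have "ps + inner (- (b + c *\<^sub>R s)) d - e * norm d \<le> py"
        by linarith
      then show ?thesis
        using ps real d_def by simp
    next
      case PInf
      then show ?thesis by simp
    next
      case MInf
      then show ?thesis
        using proper unfolding proper_fun_def by simp
    qed
  qed
qed

lemma frechet_subdiff_subset_limiting_subdiff:
  "frechet_subdiff F x \<subseteq> limiting_subdiff F x"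
proof
  fix v
  assume v: "v \<in> frechet_subdiff F x"
  then have "\<bar>F x\<bar> \<noteq> \<infinity>"
    unfolding frechet_subdiff_def by auto
  with v show "v \<in> limiting_subdiff F x"
    unfolding limiting_subdiff_def by (intro CollectI conjI exI[of _ "\<lambda>j. x"] exI[of _ "\<lambda>j. v"]) auto
qed

lemma m_cp_eq: "m_cp a b P c = (\<lambda>s. ereal (a + inner b s + c / 2 * (norm s)\<^sup>2) + P s)"
  by (simp add: fun_eq_iff m_cp_def)

lemma argmin_m_cp_attains_Inf_norm:
  assumes "lsc_fun P" and "proper_fun P" and "argmin_set (m_cp a b P c) \<noteq> {}"
  obtains scp where "scp \<in> argmin_set (m_cp a b P c)"
    and "Inf (norm ` argmin_set (m_cp a b P c)) = norm scp"
proof -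
  have "closed (argmin_set (m_cp a b P c))"
    unfolding m_cp_eq using assms(1,2)
    by (intro closed_argmin_set_continuous_plus_lsc continuous_intros)
  with assms(3) show ?thesis
    using closed_nonempty_attains_Inf_norm that by blast
qed

lemma limiting_subdiff_at_argmin_m_cp:
  assumes "scp \<in> argmin_set (m_cp a b P c)" and "c > 0" and "proper_fun P"
  shows "- (b + c *\<^sub>R scp) \<in> limiting_subdiff P scp"
  using frechet_subdiff_at_argmin_quadratic[OF assms(1)[unfolded m_cp_eq] assms(2,3)]
    frechet_subdiff_subset_limiting_subdiff by blast

lemma lower_bound_preserved_by_max:
  fixes sg :: "nat \<Rightarrow> 'a::linorder"
  assumes "smin \<le> sg 0" and "\<And>j. \<exists>sig'. sg (Suc j) = max sig' smin"
  shows "smin \<le> sg j"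
proof (cases j)
  case (Suc i)
  then show ?thesis using assms(2)[of i] by auto
qed (use assms(1) in simp)

lemma spec_norm_nonneg: "spec_norm B \<ge> 0"
  unfolding spec_norm_def by (intro onorm_pos_le matrix_vector_mul_bounded_linear)

lemma regularized_stepsize_bounds:
  assumes "nu = th1 / (spec_norm B + sg)" and "0 < th1" and "0 < smin" and "smin \<le> sg"
  shows "0 < nu" and "nu \<le> th1 / smin"
proof -
  have "smin \<le> spec_norm B + sg"
    using assms(4) spec_norm_nonneg[of B] by linarith
  then show "0 < nu" and "nu \<le> th1 / smin"
    unfolding assms(1) using assms(2,3) by (auto intro!: divide_left_mono)
qed

lemma norm_safeguarded_step_le:
  assumes "s = (if norm s' > t * norm sh then sh else s')" and "1 \<le> t"
  shows "norm s \<le> t * norm sh"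
  using assms mult_right_mono[of 1 t "norm sh"] by (auto split: if_splits)

lemma Cauchy_step_residual_bound:
  fixes gr gh scp sh sk :: "'a::real_normed_vector"
  assumes nu: "0 < nu" "nu \<le> numax" and ks: "0 < ks" "ks * norm scp \<le> norm sh"
    and small: "(1 / nu) * norm sh < eps"
    and grad: "norm (gr - gh) \<le> kg * norm sk" "0 \<le> kg"
    and step: "norm sk \<le> th2 * norm sh" "0 \<le> th2"
  shows "norm scp < (1 / ks) * numax * eps"
    and "norm (gr - gh - (1 / nu) *\<^sub>R scp) < (kg * th2 * numax + 1 / ks) * eps"
proof -
  have sh: "norm sh < nu * eps"
    using small nu by (simp add: field_simps)
  then have eps: "eps > 0"
    using nu by (smt (verit) norm_ge_zero zero_less_mult_pos)
  have "ks * norm scp < numax * eps"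
    using ks sh mult_right_mono[OF nu(2), of eps] eps by linarith
  then show "norm scp < (1 / ks) * numax * eps"
    using ks by (simp add: field_simps)
  have "norm (gr - gh) \<le> kg * th2 * numax * eps"
  proof -
    have "norm (gr - gh) \<le> kg * (th2 * norm sh)"
      using grad step by (metis mult_left_mono order.trans)
    also have "\<dots> \<le> kg * (th2 * (numax * eps))"
      using sh nu eps grad(2) step(2)
      by (intro mult_left_mono) (auto intro: order.trans[OF less_imp_le mult_right_mono])
    finally show ?thesis by (simp add: mult.assoc)
  qed
  moreover have "norm ((1 / nu) *\<^sub>R scp) < (1 / ks) * eps"
  proof -
    have "norm ((1 / nu) *\<^sub>R scp) \<le> norm sh / ks / nu"
      using ks nu by (simp add: field_simps)
    also have "\<dots> < (1 / ks) * eps"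
      using small ks nu by (simp add: field_simps)
    finally show ?thesis .
  qed
  ultimately show "norm (gr - gh - (1 / nu) *\<^sub>R scp) < (kg * th2 * numax + 1 / ks) * eps"
    using norm_triangle_ineq4[of "gr - gh" "(1 / nu) *\<^sub>R scp"] by (simp add: distrib_right)
qed

theorem theorem3p8:
  fixes f :: "real^'n \<Rightarrow> real" and fgrad :: "real^'n \<Rightarrow> real^'n"
    and h :: "real^'n \<Rightarrow> ereal"
    and psi :: "real^'n \<Rightarrow> real^'n \<Rightarrow> ereal"
    and Bf :: "real^'n \<Rightarrow> real^'n^'n"
    and lam kf kg ks gam1 gam2 gam3 eta1 eta2 th1 th2 smin :: real
    and fh :: "nat \<Rightarrow> real^'n \<Rightarrow> real" and gh :: "nat \<Rightarrow> real^'n"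
    and x shat s :: "nat \<Rightarrow> real^'n"
    and sg nu :: "nat \<Rightarrow> real"
    and eps :: real and k :: nat
  assumes f_C1: "\<forall>y. (f has_derivative (\<lambda>v. inner (fgrad y) v)) (at y)"
    and fgrad_cont: "continuous_on UNIV fgrad"
    and h_proper: "proper_fun h" and h_lsc: "lsc_fun h"
    and psi_proper: "\<forall>y. proper_fun (psi y)" and psi_lsc: "\<forall>y. lsc_fun (psi y)"
    and psi_0: "\<forall>y. psi y 0 = h y"
    and psi_subdiff: "\<forall>y. limiting_subdiff (psi y) 0 \<subseteq> limiting_subdiff h y"
    and prox_bdd: "lam > 0 \<and> (\<forall>y. \<forall>lam'. 0 < lam' \<and> lam' < lam \<longrightarrow>
                     (\<exists>c::real. \<forall>w. ereal c \<le> psi y w + ereal ((norm w)\<^sup>2 / (2 * lam'))))"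
    and B_sym: "\<forall>y. transpose (Bf y) = Bf y"
    and params: "kf > 0" "kg > 0" "0 < gam3" "gam3 \<le> 1" "1 < gam1" "gam1 \<le> gam2"
       "0 < eta1" "eta1 \<le> eta2" "eta2 < 1" "0 < th1" "th1 < 1" "1 < th2"
       "smin > 4 * kf * th1 * th2\<^sup>2 / (eta1 * (1 - th1))"
    and sigma0: "sg 0 \<ge> smin"
    and nu_def: "\<forall>j. nu j = th1 / (spec_norm (Bf (x j)) + sg j)"
    and cauchy_dec: "\<forall>j. m_cp (fh j (x j)) (gh j) (psi (x j)) (1 / nu j) (shat j)
                        \<le> m_cp (fh j (x j)) (gh j) (psi (x j)) (1 / nu j) 0"
    and step: "\<forall>j. \<exists>s'. m_q (fh j (x j)) (gh j) (Bf (x j)) (psi (x j)) (sg j) s'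
                          \<le> m_q (fh j (x j)) (gh j) (Bf (x j)) (psi (x j)) (sg j) (shat j)
                       \<and> s j = (if norm s' > th2 * norm (shat j) then shat j else s')"
    and iterate: "\<forall>j. let rho =
             ((ereal (fh j (x j)) + h (x j)) - (ereal (fh j (x j + s j)) + h (x j + s j))) /
             ((ereal (phi_q (fh j (x j)) (gh j) (Bf (x j)) 0) + psi (x j) 0)
               - (ereal (phi_q (fh j (x j)) (gh j) (Bf (x j)) (s j)) + psi (x j) (s j)))
           in x (Suc j) = (if rho \<ge> ereal eta1 then x j + s j else x j)
            \<and> (\<exists>sig'. (rho \<ge> ereal eta2 \<longrightarrow> gam3 * sg j \<le> sig' \<and> sig' \<le> sg j)
                    \<and> (ereal eta1 \<le> rho \<and> rho < ereal eta2 \<longrightarrow> sg j \<le> sig' \<and> sig' \<le> gam1 * sg j)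
                    \<and> (rho < ereal eta1 \<longrightarrow> gam1 * sg j \<le> sig' \<and> sig' \<le> gam2 * sg j)
                    \<and> sg (Suc j) = max sig' smin)"
    and A5: "0 < ks" "ks \<le> 1"
       "\<forall>j. argmin_set (m_cp (fh j (x j)) (gh j) (psi (x j)) (1 / nu j)) \<noteq> {}
          \<and> norm (shat j) \<ge> ks * Inf (norm ` argmin_set (m_cp (fh j (x j)) (gh j) (psi (x j)) (1 / nu j)))"
    and A6: "\<forall>j. \<bar>f (x j) - fh j (x j)\<bar> \<le> kf * (norm (s j))\<^sup>2
              \<and> \<bar>f (x j + s j) - fh j (x j + s j)\<bar> \<le> kf * (norm (s j))\<^sup>2
              \<and> norm (fgrad (x j) - gh j) \<le> kg * norm (s j)"
    and eps_pos: "eps > 0"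
    and small: "(1 / nu k) * norm (shat k) < eps"
  shows "\<exists>scp. scp \<in> argmin_set (m_cp (fh k (x k)) (gh k) (psi (x k)) (1 / nu k))
           \<and> norm (shat k) \<ge> ks * norm scp
           \<and> norm scp < (1 / ks) * (th1 / smin) * eps
           \<and> (\<exists>u. u \<in> (\<lambda>v. fgrad (x k) + v) ` limiting_subdiff (psi (x k)) scp
                  \<and> norm u < (kg * th2 * (th1 / smin) + 1 / ks) * eps)"
proof -
  have "0 < 4 * kf * th1 * th2\<^sup>2 / (eta1 * (1 - th1))"
    using params by (intro divide_pos_pos mult_pos_pos) auto
  then have smin_pos: "smin > 0"
    using params(13) by linarith
  have "\<exists>sig'. sg (Suc j) = max sig' smin" for j
    using conjunct2[OF iterate[rule_format, of j, unfolded Let_def]] by blast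
  then have "smin \<le> sg k"
    using sigma0 lower_bound_preserved_by_max by metis
  then have nu_pos: "0 < nu k" and nu_le: "nu k \<le> th1 / smin"
    using regularized_stepsize_bounds nu_def params(10) smin_pos by blast+
  let ?F = "m_cp (fh k (x k)) (gh k) (psi (x k)) (1 / nu k)"
  obtain scp where scp: "scp \<in> argmin_set ?F" and "Inf (norm ` argmin_set ?F) = norm scp"
    using argmin_m_cp_attains_Inf_norm psi_lsc psi_proper A5(3) by metis
  with A5(3) have scp_le: "ks * norm scp \<le> norm (shat k)"
    by metis
  have "- (gh k + (1 / nu k) *\<^sub>R scp) \<in> limiting_subdiff (psi (x k)) scp"
    using scp nu_pos psi_proper by (intro limiting_subdiff_at_argmin_m_cp) auto
  then have u: "fgrad (x k) - gh k - (1 / nu k) *\<^sub>R scp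
      \<in> (\<lambda>v. fgrad (x k) + v) ` limiting_subdiff (psi (x k)) scp"
    by (rule image_eqI[rotated]) simp
  obtain s' where "s k = (if norm s' > th2 * norm (shat k) then shat k else s')"
    using step by blast
  then have "norm (s k) \<le> th2 * norm (shat k)"
    using params(12) by (intro norm_safeguarded_step_le) auto
  moreover have "norm (fgrad (x k) - gh k) \<le> kg * norm (s k)"
    using A6 by blast
  ultimately have "norm scp < (1 / ks) * (th1 / smin) * eps"
    and "norm (fgrad (x k) - gh k - (1 / nu k) *\<^sub>R scp) < (kg * th2 * (th1 / smin) + 1 / ks) * eps"
    using Cauchy_step_residual_bound[OF nu_pos nu_le A5(1) scp_le small] params(2,12) by auto
  with scp scp_le u show ?thesis
    by blast
qed

end
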